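(* Let $\Gamma$ act by isometries on metric spaces $(X,d_X)$ and $(Y,d_Y)$, and let $\hat X\supseteq X$ be a partial compactification such that the $\Gamma$-action extends to a proper cocompact action on $\hat X\times Y$; let $d_\Gamma$ be a $\Gamma$-invariant proper metric on $\hat X\times Y$ inducing its topology. Let $(x_i,y_i)$ and $(x_i',y_i')$ be sequences in $\hat X\times Y$. If $d_Y(y_i,y_i')\to\infty$, then $d_\Gamma((x_i,y_i),(x_i',y_i'))\to\infty$.
   Context: The action of $\Gamma$ on $\hat X\times Y$ is diagonal; $d_X$, $d_Y$ are $\Gamma$-invariant. A metric is proper if closed bounded sets are compact. *)

theory Defs
  imports "HOL-Analysis.Analysis" "HOL-Algebra.Group_Action"
begin

definition partial_compactification :: "'a topology \<Rightarrow> 'a set \<Rightarrow> ('a \<Rightarrow> 'a \<Rightarrow> real) \<Rightarrow> bool" where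
  "partial_compactification TX X dX \<longleftrightarrow>
     X \<subseteq> topspace TX \<and> openin TX X \<and> TX closure_of X = topspace TX \<and>
     subtopology TX X = Metric_space.mtopology X dX"

text \<open>Diagonal action on the product A \<times> B (extensional, as required by BijGroup).\<close>
definition diag_action :: "'a set \<Rightarrow> 'b set \<Rightarrow> ('g \<Rightarrow> 'a \<Rightarrow> 'a) \<Rightarrow> ('g \<Rightarrow> 'b \<Rightarrow> 'b)
    \<Rightarrow> 'g \<Rightarrow> ('a \<times> 'b) \<Rightarrow> ('a \<times> 'b)" where
  "diag_action A B \<phi> \<psi> g = restrict (\<lambda>(a, b). (\<phi> g a, \<psi> g b)) (A \<times> B)"

definition proper_action :: "('g, 'm) monoid_scheme \<Rightarrow> 'z topology \<Rightarrow> ('g \<Rightarrow> 'z \<Rightarrow> 'z) \<Rightarrow> bool" where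
  "proper_action G T act \<longleftrightarrow>
     (\<forall>g\<in>carrier G. homeomorphic_map T T (act g)) \<and>
     (\<forall>K. compactin T K \<longrightarrow> finite {g \<in> carrier G. act g ` K \<inter> K \<noteq> {}})"

definition cocompact_action :: "('g, 'm) monoid_scheme \<Rightarrow> 'z topology \<Rightarrow> ('g \<Rightarrow> 'z \<Rightarrow> 'z) \<Rightarrow> bool" where
  "cocompact_action G T act \<longleftrightarrow>
     (\<exists>K. compactin T K \<and> (\<Union>g\<in>carrier G. act g ` K) = topspace T)"

definition proper_metric :: "'z set \<Rightarrow> ('z \<Rightarrow> 'z \<Rightarrow> real) \<Rightarrow> bool" where
  "proper_metric M d \<longleftrightarrow>
     (\<forall>S. closedin (Metric_space.mtopology M d) S \<and> Metric_space.mbounded M d S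
          \<longrightarrow> compactin (Metric_space.mtopology M d) S)"

end

theory Submission
  imports Defs
begin

(* Translate the first point of a pair into a fixed compact fundamental set K. Since the
   action is isometric for dG, a pair at dG-distance at most R is then moved into a fixed
   closed ball, which is compact by properness; its projection to Y is compact, hence
   bounded, and dY is invariant. So bounded dG-distance forces bounded dY-distance. *)

lemma (in Metric_space) proper_metric_compactin_mcball:
  assumes "proper_metric M d"
  shows "compactin mtopology (mcball c r)"
  using assms unfolding proper_metric_def by (simp add: closedin_mcball mbounded_mcball)

lemma cocompact_isometries_bound_invariant_dist:
  assumes M: "Metric_space M d" and proper: "proper_metric M d"
    and K: "compactin (Metric_space.mtopology M d) K" and cover: "M \<subseteq> (\<Union>h\<in>H. h ` K)"
    and onto: "\<And>h. h \<in> H \<Longrightarrow> M \<subseteq> h ` M"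
    and iso: "\<And>h p q. h \<in> H \<Longrightarrow> p \<in> M \<Longrightarrow> q \<in> M \<Longrightarrow> d (h p) (h q) = d p q"
    and Y: "Metric_space Y e"
    and f: "continuous_map (Metric_space.mtopology M d) (Metric_space.mtopology Y e) f"
    and inv: "\<And>h p q. h \<in> H \<Longrightarrow> p \<in> M \<Longrightarrow> q \<in> M \<Longrightarrow> e (f (h p)) (f (h q)) = e (f p) (f q)"
  shows "\<exists>D. \<forall>p\<in>M. \<forall>q\<in>M. d p q \<le> R \<longrightarrow> e (f p) (f q) \<le> D"
proof -
  interpret M: Metric_space M d by (rule M)
  interpret Y: Metric_space Y e by (rule Y)
  have KM: "K \<subseteq> M" using compactin_subset_topspace[OF K] by simp
  obtain c r where Kr: "K \<subseteq> M.mcball c r"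
    using M.compactin_imp_mbounded[OF K] unfolding M.mbounded_def by blast
  define C where "C = M.mcball c (r + \<bar>R\<bar>)"
  have "compactin Y.mtopology (f ` C)"
    using image_compactin[OF M.proper_metric_compactin_mcball[OF proper] f] by (simp add: C_def)
  then obtain D where D: "\<And>a b. a \<in> f ` C \<Longrightarrow> b \<in> f ` C \<Longrightarrow> e a b \<le> D"
    using Y.compactin_imp_mbounded unfolding Y.mbounded_alt by blast
  show ?thesis
  proof (intro exI ballI impI)
    fix p q assume p: "p \<in> M" and q: "q \<in> M" and pq: "d p q \<le> R"
    obtain h k where h: "h \<in> H" and k: "k \<in> K" and pk: "p = h k" using cover p by blast
    obtain q0 where q0: "q0 \<in> M" and qq0: "q = h q0" using onto[OF h] q by blast
    have kM: "k \<in> M" using k KM by blast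
    have kC: "k \<in> C" using k Kr unfolding C_def M.mcball_def by auto
    have "d c k \<le> r" using Kr k by (auto simp: M.in_mcball)
    have "d c q0 \<le> d c k + d k q0" using M.triangle kC kM q0 unfolding C_def by auto
    also have "\<dots> \<le> r + \<bar>R\<bar>" using \<open>d c k \<le> r\<close> pq iso[OF h kM q0] pk qq0 by simp
    finally have q0C: "q0 \<in> C" using kC q0 unfolding C_def by auto
    have "e (f p) (f q) = e (f k) (f q0)" using inv[OF h kM q0] pk qq0 by simp
    also have "\<dots> \<le> D" using D kC q0C by blast
    finally show "e (f p) (f q) \<le> D" .
  qed
qed

lemma filterlim_at_top_if_bounded_controls:
  fixes a b :: "'i \<Rightarrow> real"
  assumes control: "\<And>R. \<exists>D. \<forall>i. a i \<le> R \<longrightarrow> b i \<le> D"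
    and b: "filterlim b at_top F"
  shows "filterlim a at_top F"
  unfolding filterlim_at_top
proof
  fix R
  obtain D where D: "\<forall>i. a i \<le> R \<longrightarrow> b i \<le> D" using control by blast
  have "eventually (\<lambda>i. D + 1 \<le> b i) F" using b unfolding filterlim_at_top by blast
  then show "eventually (\<lambda>i. R \<le> a i) F"
  proof eventually_elim
    fix i assume "D + 1 \<le> b i"
    then show "R \<le> a i" using D by (smt (verit))
  qed
qed

lemma diag_action_apply [simp]:
  "a \<in> A \<Longrightarrow> b \<in> B \<Longrightarrow> diag_action A B \<phi> \<psi> g (a, b) = (\<phi> g a, \<psi> g b)"
  by (simp add: diag_action_def)

lemma diag_action_onto:
  assumes "group_action G A \<phi>" "group_action G B \<psi>" "g \<in> carrier G"
  shows "A \<times> B \<subseteq> diag_action A B \<phi> \<psi> g ` (A \<times> B)"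
proof
  fix p assume "p \<in> A \<times> B"
  then obtain a b where "p = (\<phi> g a, \<psi> g b)" "a \<in> A" "b \<in> B"
    using group_action.surj_prop[OF assms(1,3)] group_action.surj_prop[OF assms(2,3)]
    by (metis (no_types, lifting) imageE mem_Sigma_iff prod.collapse)
  then show "p \<in> diag_action A B \<phi> \<psi> g ` (A \<times> B)"
    by (metis diag_action_apply mem_Sigma_iff rev_image_eqI)
qed

theorem lemma6p5:
  fixes G :: "('g, 'm) monoid_scheme"
    and TX :: "'a topology" and X :: "'a set" and dX :: "'a \<Rightarrow> 'a \<Rightarrow> real"
    and Y :: "'b set" and dY :: "'b \<Rightarrow> 'b \<Rightarrow> real"
    and \<phi> :: "'g \<Rightarrow> 'a \<Rightarrow> 'a" and \<psi> :: "'g \<Rightarrow> 'b \<Rightarrow> 'b"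
    and dG :: "'a \<times> 'b \<Rightarrow> 'a \<times> 'b \<Rightarrow> real"
    and x x' :: "nat \<Rightarrow> 'a" and y y' :: "nat \<Rightarrow> 'b"
  assumes grp: "group G"
    and mX: "Metric_space X dX" and mY: "Metric_space Y dY"
    and pc: "partial_compactification TX X dX"
    and actX: "group_action G (topspace TX) \<phi>"
    and presX: "\<forall>g\<in>carrier G. \<phi> g ` X \<subseteq> X"
    and isoX: "\<forall>g\<in>carrier G. \<forall>a\<in>X. \<forall>b\<in>X. dX (\<phi> g a) (\<phi> g b) = dX a b"
    and actY: "group_action G Y \<psi>"
    and isoY: "\<forall>g\<in>carrier G. \<forall>a\<in>Y. \<forall>b\<in>Y. dY (\<psi> g a) (\<psi> g b) = dY a b"
    and propact: "proper_action G (prod_topology TX (Metric_space.mtopology Y dY))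
                 (diag_action (topspace TX) Y \<phi> \<psi>)"
    and cocpt: "cocompact_action G (prod_topology TX (Metric_space.mtopology Y dY))
                 (diag_action (topspace TX) Y \<phi> \<psi>)"
    and mG: "Metric_space (topspace TX \<times> Y) dG"
    and invG: "\<forall>g\<in>carrier G. \<forall>p\<in>topspace TX \<times> Y. \<forall>q\<in>topspace TX \<times> Y.
                 dG (diag_action (topspace TX) Y \<phi> \<psi> g p) (diag_action (topspace TX) Y \<phi> \<psi> g q) = dG p q"
    and properG: "proper_metric (topspace TX \<times> Y) dG"
    and topG: "Metric_space.mtopology (topspace TX \<times> Y) dG
                 = prod_topology TX (Metric_space.mtopology Y dY)"
    and seqs: "\<forall>i. x i \<in> topspace TX \<and> y i \<in> Y \<and> x' i \<in> topspace TX \<and> y' i \<in> Y"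
    and divY: "filterlim (\<lambda>i. dY (y i) (y' i)) at_top sequentially"
  shows "filterlim (\<lambda>i. dG (x i, y i) (x' i, y' i)) at_top sequentially"
proof (rule filterlim_at_top_if_bounded_controls[OF _ divY])
  let ?H = "diag_action (topspace TX) Y \<phi> \<psi> ` carrier G"
  obtain K where "compactin (prod_topology TX (Metric_space.mtopology Y dY)) K"
      and Kcov: "(\<Union>g\<in>carrier G. diag_action (topspace TX) Y \<phi> \<psi> g ` K)
                 = topspace (prod_topology TX (Metric_space.mtopology Y dY))"
    using cocpt unfolding cocompact_action_def by blast
  then have K: "compactin (Metric_space.mtopology (topspace TX \<times> Y) dG) K" using topG by simp
  have cover: "topspace TX \<times> Y \<subseteq> (\<Union>h\<in>?H. h ` K)"
    using Kcov by (simp add: Metric_space.topspace_mtopology[OF mY])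
  have onto: "topspace TX \<times> Y \<subseteq> h ` (topspace TX \<times> Y)" if "h \<in> ?H" for h
    using that diag_action_onto[OF actX actY] by blast
  have iso: "dG (h p) (h q) = dG p q"
    if "h \<in> ?H" "p \<in> topspace TX \<times> Y" "q \<in> topspace TX \<times> Y" for h p q
    using that invG by blast
  have snd_cont: "continuous_map (Metric_space.mtopology (topspace TX \<times> Y) dG)
                    (Metric_space.mtopology Y dY) snd"
    using topG continuous_map_snd by simp
  have snd_inv: "dY (snd (h p)) (snd (h q)) = dY (snd p) (snd q)"
    if "h \<in> ?H" "p \<in> topspace TX \<times> Y" "q \<in> topspace TX \<times> Y" for h p q
    using that isoY by auto
  fix R
  obtain D where D: "\<forall>p\<in>topspace TX \<times> Y. \<forall>q\<in>topspace TX \<times> Y. dG p q \<le> R \<longrightarrow> dY (snd p) (snd q) \<le> D"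
    using cocompact_isometries_bound_invariant_dist[OF mG properG K cover onto iso mY snd_cont snd_inv]
    by blast
  show "\<exists>D. \<forall>i. dG (x i, y i) (x' i, y' i) \<le> R \<longrightarrow> dY (y i) (y' i) \<le> D"
  proof (intro exI allI impI)
    fix i
    have "(x i, y i) \<in> topspace TX \<times> Y" "(x' i, y' i) \<in> topspace TX \<times> Y" using seqs by auto
    then show "dG (x i, y i) (x' i, y' i) \<le> R \<Longrightarrow> dY (y i) (y' i) \<le> D" using D by fastforce
  qed
qed

end
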